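(* Let $\mathbf A$ be a WD-algebra, $P$ a prime filter of $\mathbf A$ and $a,b\in A$. Then $a\leftarrow b\in P$ if and only if there exists a prime filter $Q$ of $\mathbf A$ such that $(P,Q)\in S_{\mathbf A}$, $a\in Q$ and $b\notin Q$.
   Context: A WD-algebra is an algebra $(A,\wedge,\vee,\leftarrow,0,1)$ such that $(A,\wedge,\vee,0,1)$ is a bounded distributive lattice and for all $a,b,c\in A$: $a\leftarrow a=0$; $(a\vee b)\leftarrow c=(a\leftarrow c)\vee(b\leftarrow c)$; $a\leftarrow(b\wedge c)=(a\leftarrow b)\vee(a\leftarrow c)$; $a\leftarrow c\le(a\leftarrow b)\vee(b\leftarrow c)$. For a prime filter $P$ and a filter $Q$ of $\mathbf A$, $(P,Q)\in S_{\mathbf A}$ iff for all $a,b\in A$, $a\in Q$ and $b\notin Q$ imply $a\leftarrow b\in P$. *)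

theory Defs
  imports Main
begin

text \<open>WD-algebras: bounded distributive lattices with a binary operation
  (written \<open>a \<leftarrow> b\<close> in the paper, here \<open>wsub a b\<close>) satisfying the four axioms.\<close>

class wd_algebra = bounded_lattice + distrib_lattice +
  fixes wsub :: "'a \<Rightarrow> 'a \<Rightarrow> 'a"
  assumes wsub_self: "wsub a a = bot"
    and wsub_sup_left: "wsub (sup a b) c = sup (wsub a c) (wsub b c)"
    and wsub_inf_right: "wsub a (inf b c) = sup (wsub a b) (wsub a c)"
    and wsub_trans: "wsub a c \<le> sup (wsub a b) (wsub b c)"

definition is_filter :: "'a::bounded_lattice set \<Rightarrow> bool" where
  "is_filter F \<longleftrightarrow> top \<in> F \<and>
     (\<forall>a b. a \<in> F \<and> a \<le> b \<longrightarrow> b \<in> F) \<and>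
     (\<forall>a b. a \<in> F \<and> b \<in> F \<longrightarrow> inf a b \<in> F)"

definition is_prime_filter :: "'a::bounded_lattice set \<Rightarrow> bool" where
  "is_prime_filter P \<longleftrightarrow> is_filter P \<and> bot \<notin> P \<and>
     (\<forall>a b. sup a b \<in> P \<longrightarrow> a \<in> P \<or> b \<in> P)"

definition S_rel :: "'a::wd_algebra set \<Rightarrow> 'a set \<Rightarrow> bool" where
  "S_rel P Q \<longleftrightarrow> is_prime_filter P \<and> is_filter Q \<and>
     (\<forall>a b. a \<in> Q \<and> b \<notin> Q \<longrightarrow> wsub a b \<in> P)"

end

theory Submission
  imports Defs
begin

text \<open>For a prime filter \<open>P\<close>, each set \<open>{v. x \<leftarrow> v \<notin> P}\<close> is a filter containing \<open>x\<close> and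
  \<open>S\<close>-related to \<open>P\<close> (by the last axiom and primality of \<open>P\<close>). So if \<open>a \<leftarrow> b \<in> P\<close>, Zorn's
  lemma gives a maximal filter \<open>M\<close> with \<open>(P, M) \<in> S\<close>, \<open>a \<in> M\<close> and \<open>b \<notin> M\<close>. This \<open>M\<close> is
  prime: for \<open>y \<notin> M\<close> the directed union of the filters \<open>{v. (m \<sqinter> y) \<leftarrow> v \<notin> P}\<close>, \<open>m \<in> M\<close>,
  is \<open>S\<close>-related to \<open>P\<close> and strictly extends \<open>M\<close>, so it contains \<open>b\<close>. Hence \<open>y, z \<notin> M\<close>
  yield \<open>m \<in> M\<close> with \<open>(m \<sqinter> y) \<leftarrow> b \<notin> P\<close> and \<open>(m \<sqinter> z) \<leftarrow> b \<notin> P\<close>, so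
  \<open>(m \<sqinter> (y \<squnion> z)) \<leftarrow> b \<notin> P\<close>, which forces \<open>y \<squnion> z \<notin> M\<close>.\<close>

lemma wsub_mono_left:
  fixes x :: "'a::wd_algebra"
  assumes "x \<le> x'"
  shows "wsub x c \<le> wsub x' c"
proof -
  have "wsub x' c = sup (wsub x c) (wsub x' c)"
    using assms wsub_sup_left[of x x' c] by (simp add: sup_absorb2)
  then show ?thesis by (metis sup.cobounded1)
qed

lemma wsub_antimono_right:
  fixes a :: "'a::wd_algebra"
  assumes "c \<le> b"
  shows "wsub a b \<le> wsub a c"
proof -
  have "wsub a c = sup (wsub a b) (wsub a c)"
    using assms wsub_inf_right[of a b c] by (simp add: inf_absorb2)
  then show ?thesis by (metis sup.cobounded1)
qed

lemma wsub_top_right: "wsub (a::'a::wd_algebra) top = bot"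
  using wsub_antimono_right[of a top a] by (simp add: wsub_self bot_unique)

lemma filter_top: "is_filter F \<Longrightarrow> top \<in> F"
  unfolding is_filter_def by blast

lemma filter_up: "is_filter F \<Longrightarrow> x \<in> F \<Longrightarrow> x \<le> y \<Longrightarrow> y \<in> F"
  unfolding is_filter_def by blast

lemma filter_inf: "is_filter F \<Longrightarrow> x \<in> F \<Longrightarrow> y \<in> F \<Longrightarrow> inf x y \<in> F"
  unfolding is_filter_def by blast

lemma prime_filter_bot: "is_prime_filter P \<Longrightarrow> bot \<notin> P"
  unfolding is_prime_filter_def by blast

lemma prime_filter_sup_iff: "is_prime_filter P \<Longrightarrow> sup x y \<in> P \<longleftrightarrow> x \<in> P \<or> y \<in> P"
  unfolding is_prime_filter_def by (meson filter_up sup.cobounded1 sup.cobounded2)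

lemma is_filter_directed_Union:
  fixes C :: "'a::bounded_lattice set set"
  assumes "C \<noteq> {}" and "\<forall>F\<in>C. is_filter F"
    and directed: "\<forall>X\<in>C. \<forall>Y\<in>C. \<exists>Z\<in>C. X \<subseteq> Z \<and> Y \<subseteq> Z"
  shows "is_filter (\<Union>C)"
  unfolding is_filter_def
proof (intro conjI allI impI)
  show "top \<in> \<Union>C"
    using assms(1,2) filter_top by blast
  show "y \<in> \<Union>C" if "x \<in> \<Union>C \<and> x \<le> y" for x y
    using that assms(2) filter_up by blast
  show "inf x y \<in> \<Union>C" if xy: "x \<in> \<Union>C \<and> y \<in> \<Union>C" for x y
  proof -
    obtain X Y where "X \<in> C" "Y \<in> C" "x \<in> X" "y \<in> Y"
      using xy by blast
    then obtain Z where "Z \<in> C" "x \<in> Z" "y \<in> Z"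
      using directed by blast
    then show ?thesis
      using assms(2) filter_inf by blast
  qed
qed

lemma is_filter_chain_Union:
  fixes C :: "'a::bounded_lattice set set"
  assumes "chain\<^sub>\<subseteq> C" and "C \<noteq> {}" and "\<forall>F\<in>C. is_filter F"
  shows "is_filter (\<Union>C)"
proof (rule is_filter_directed_Union[OF assms(2,3)])
  show "\<forall>X\<in>C. \<forall>Y\<in>C. \<exists>Z\<in>C. X \<subseteq> Z \<and> Y \<subseteq> Z"
  proof (intro ballI)
    fix X Y assume "X \<in> C" "Y \<in> C"
    then have "X \<subseteq> Y \<or> Y \<subseteq> X"
      using assms(1) unfolding chain_subset_def by blast
    then show "\<exists>Z\<in>C. X \<subseteq> Z \<and> Y \<subseteq> Z"
      using \<open>X \<in> C\<close> \<open>Y \<in> C\<close> by blast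
  qed
qed

lemma S_rel_Union:
  assumes "is_prime_filter P" and "is_filter (\<Union>C)" and "\<forall>Q\<in>C. S_rel P Q"
  shows "S_rel P (\<Union>C)"
  using assms unfolding S_rel_def by blast

definition wsub_filter :: "'a::wd_algebra set \<Rightarrow> 'a \<Rightarrow> 'a set" where
  "wsub_filter P x = {y. wsub x y \<notin> P}"

lemma is_filter_wsub_filter:
  assumes P: "is_prime_filter P"
  shows "is_filter (wsub_filter P x)"
  unfolding is_filter_def wsub_filter_def mem_Collect_eq
proof (intro conjI allI impI)
  show "wsub x top \<notin> P"
    using P by (simp add: wsub_top_right prime_filter_bot)
  show "wsub x v \<notin> P" if "wsub x u \<notin> P \<and> u \<le> v" for u v
    using that wsub_antimono_right[of u v x] P
    by (meson is_prime_filter_def filter_up)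
  show "wsub x (inf u v) \<notin> P" if "wsub x u \<notin> P \<and> wsub x v \<notin> P" for u v
    using that P by (simp add: wsub_inf_right prime_filter_sup_iff)
qed

lemma wsub_filter_self:
  assumes "is_prime_filter P"
  shows "x \<in> wsub_filter P x"
  using assms by (simp add: wsub_filter_def wsub_self prime_filter_bot)

lemma wsub_filter_antimono:
  assumes P: "is_prime_filter P" and "x \<le> x'"
  shows "wsub_filter P x' \<subseteq> wsub_filter P x"
  using assms wsub_mono_left[of x x'] unfolding wsub_filter_def
  by (auto intro: filter_up simp: is_prime_filter_def)

lemma S_rel_wsub_filter:
  assumes P: "is_prime_filter P"
  shows "S_rel P (wsub_filter P x)"
  unfolding S_rel_def
proof (intro conjI allI impI P is_filter_wsub_filter)
  fix u v assume "u \<in> wsub_filter P x \<and> v \<notin> wsub_filter P x"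
  then have "wsub x u \<notin> P" and "wsub x v \<in> P"
    unfolding wsub_filter_def by blast+
  moreover have "sup (wsub x u) (wsub u v) \<in> P"
    using \<open>wsub x v \<in> P\<close> wsub_trans[of x v u] P
    unfolding is_prime_filter_def by (blast intro: filter_up)
  ultimately show "wsub u v \<in> P"
    using prime_filter_sup_iff[OF P] by blast
qed

lemma S_rel_extend:
  fixes y :: "'a::wd_algebra"
  assumes S: "S_rel P M"
  defines "M' \<equiv> \<Union>m\<in>M. wsub_filter P (inf m y)"
  shows "S_rel P M'" and "M \<subseteq> M'" and "y \<in> M'"
proof -
  have P: "is_prime_filter P" and M: "is_filter M"
    using S unfolding S_rel_def by blast+
  have directed: "wsub_filter P (inf m1 y) \<union> wsub_filter P (inf m2 y)
      \<subseteq> wsub_filter P (inf (inf m1 m2) y)" for m1 m2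
  proof -
    have "inf (inf m1 m2) y \<le> inf m1 y" "inf (inf m1 m2) y \<le> inf m2 y"
      by (auto intro: le_infI1 le_infI2)
    then show ?thesis
      by (intro Un_least wsub_filter_antimono[OF P])
  qed
  then have "is_filter M'"
    unfolding M'_def
  proof (intro is_filter_directed_Union ballI)
    show "(\<lambda>m. wsub_filter P (inf m y)) ` M \<noteq> {}"
      using filter_top[OF M] by blast
    show "is_filter F" if "F \<in> (\<lambda>m. wsub_filter P (inf m y)) ` M" for F
      using that is_filter_wsub_filter[OF P] by blast
    show "\<exists>Z\<in>(\<lambda>m. wsub_filter P (inf m y)) ` M. X \<subseteq> Z \<and> Y \<subseteq> Z"
      if XY: "X \<in> (\<lambda>m. wsub_filter P (inf m y)) ` M" "Y \<in> (\<lambda>m. wsub_filter P (inf m y)) ` M"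
      for X Y
    proof -
      obtain m1 m2 where "m1 \<in> M" "m2 \<in> M"
        and "X = wsub_filter P (inf m1 y)" "Y = wsub_filter P (inf m2 y)"
        using XY by blast
      moreover have "inf m1 m2 \<in> M"
        using filter_inf[OF M] \<open>m1 \<in> M\<close> \<open>m2 \<in> M\<close> .
      ultimately show ?thesis
        using directed[of m1 m2] by blast
    qed
  qed
  then show "S_rel P M'"
    unfolding M'_def by (rule S_rel_Union[OF P]) (auto simp: S_rel_wsub_filter[OF P])
  show "M \<subseteq> M'"
  proof
    fix u assume "u \<in> M"
    have "inf u y \<in> wsub_filter P (inf u y)"
      using wsub_filter_self[OF P] .
    then have "u \<in> wsub_filter P (inf u y)"
      using filter_up[OF is_filter_wsub_filter[OF P]] inf_le1 by blast
    then show "u \<in> M'"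
      unfolding M'_def using \<open>u \<in> M\<close> by blast
  qed
  have "y \<in> wsub_filter P (inf top y)"
    using wsub_filter_self[OF P, of y] by simp
  then show "y \<in> M'"
    unfolding M'_def using filter_top[OF M] by blast
qed

lemma maximal_S_rel_is_prime_filter:
  assumes S: "S_rel P M" and "b \<notin> M"
    and maximal: "\<And>Q. S_rel P Q \<Longrightarrow> M \<subseteq> Q \<Longrightarrow> b \<notin> Q \<Longrightarrow> Q = M"
  shows "is_prime_filter M"
proof -
  have P: "is_prime_filter P" and M: "is_filter M"
    using S unfolding S_rel_def by blast+
  have witness: "\<exists>m\<in>M. b \<in> wsub_filter P (inf m y)" if "y \<notin> M" for y
    using maximal[OF S_rel_extend(1,2)[OF S, of y]] S_rel_extend(3)[OF S, of y] that by blast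
  have "y \<in> M \<or> z \<in> M" if yz: "sup y z \<in> M" for y z
  proof (rule ccontr)
    assume "\<not> (y \<in> M \<or> z \<in> M)"
    then obtain m1 m2 where m: "m1 \<in> M" "m2 \<in> M"
      and "b \<in> wsub_filter P (inf m1 y)" "b \<in> wsub_filter P (inf m2 z)"
      using witness by blast
    moreover have "inf (inf m1 m2) y \<le> inf m1 y" "inf (inf m1 m2) z \<le> inf m2 z"
      by (auto intro: le_infI1 le_infI2)
    ultimately have "b \<in> wsub_filter P (inf (inf m1 m2) y)" "b \<in> wsub_filter P (inf (inf m1 m2) z)"
      using wsub_filter_antimono[OF P] by blast+
    then have "wsub (sup (inf (inf m1 m2) y) (inf (inf m1 m2) z)) b \<notin> P"
      by (simp add: wsub_filter_def wsub_sup_left prime_filter_sup_iff[OF P])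
    moreover have "sup (inf (inf m1 m2) y) (inf (inf m1 m2) z) \<in> M"
      using m yz by (simp add: filter_inf[OF M] flip: inf_sup_distrib1)
    ultimately show False
      using S \<open>b \<notin> M\<close> unfolding S_rel_def by blast
  qed
  moreover have "bot \<notin> M"
    using \<open>b \<notin> M\<close> filter_up[OF M] bot_least by blast
  ultimately show ?thesis
    unfolding is_prime_filter_def using M by blast
qed

lemma exists_maximal_S_rel:
  fixes a b :: "'a::wd_algebra"
  assumes P: "is_prime_filter P" and "wsub a b \<in> P"
  obtains M where "S_rel P M" "a \<in> M" "b \<notin> M"
    "\<And>Q. S_rel P Q \<Longrightarrow> M \<subseteq> Q \<Longrightarrow> b \<notin> Q \<Longrightarrow> Q = M"
proof -
  define A where "A = {Q. S_rel P Q \<and> a \<in> Q \<and> b \<notin> Q}"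
  have "wsub_filter P a \<in> A"
    using assms unfolding A_def
    by (simp add: S_rel_wsub_filter wsub_filter_self) (simp add: wsub_filter_def)
  have "\<exists>U\<in>A. \<forall>X\<in>C. X \<subseteq> U" if "C \<in> chains A" for C
  proof (cases "C = {}")
    case True
    then show ?thesis
      using \<open>wsub_filter P a \<in> A\<close> by blast
  next
    case False
    have "C \<subseteq> A" "chain\<^sub>\<subseteq> C"
      using \<open>C \<in> chains A\<close> unfolding chains_def by blast+
    then have "is_filter (\<Union>C)"
      using is_filter_chain_Union False unfolding A_def S_rel_def by blast
    then have "\<Union>C \<in> A"
      using S_rel_Union[OF P] \<open>C \<subseteq> A\<close> False unfolding A_def by blast
    then show ?thesis
      by blast
  qed
  then obtain M where "M \<in> A" and "\<forall>X\<in>A. M \<subseteq> X \<longrightarrow> X = M"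
    using Zorn_Lemma2[of A] by blast
  then show thesis
    using that unfolding A_def by blast
qed

theorem corollary3p10:
  fixes P :: "'a::wd_algebra set" and a b :: 'a
  assumes "is_prime_filter P"
  shows "wsub a b \<in> P \<longleftrightarrow>
         (\<exists>Q. is_prime_filter Q \<and> S_rel P Q \<and> a \<in> Q \<and> b \<notin> Q)"
proof
  assume "wsub a b \<in> P"
  then obtain M where "S_rel P M" "a \<in> M" "b \<notin> M"
    and maximal: "\<And>Q. S_rel P Q \<Longrightarrow> M \<subseteq> Q \<Longrightarrow> b \<notin> Q \<Longrightarrow> Q = M"
    using exists_maximal_S_rel[OF assms] by blast
  have "is_prime_filter M"
    using \<open>S_rel P M\<close> \<open>b \<notin> M\<close> maximal by (rule maximal_S_rel_is_prime_filter)
  then show "\<exists>Q. is_prime_filter Q \<and> S_rel P Q \<and> a \<in> Q \<and> b \<notin> Q"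
    using \<open>S_rel P M\<close> \<open>a \<in> M\<close> \<open>b \<notin> M\<close> by blast
next
  assume "\<exists>Q. is_prime_filter Q \<and> S_rel P Q \<and> a \<in> Q \<and> b \<notin> Q"
  then show "wsub a b \<in> P"
    unfolding S_rel_def by blast
qed

end
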